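(* There exists $\alpha_0 = \alpha_0(n) > 1$ such that for every $\alpha_n \ge \alpha_0$ the following holds. There exists a set $\mathcal{E}_0 \subseteq \mathcal{E}$ with the property that for every $K \in \mathcal{K}$ there is an $E \in \mathcal{E}_0$ with $$\alpha_n^{-1}K \subseteq E \subseteq \alpha_n K, \qquad (\ast)$$ and such that $\mathcal{E}_0$ can be partitioned into at most $C(n,\alpha_n)$ classes ("colours"), $C(n,\alpha_n)$ a finite number depending only on $n$ and $\alpha_n$, in such a way that every $K \in \mathcal{K}$ satisfies $(\ast)$ for at most one $E \in \mathcal{E}_0$ of any given colour.
   Context: $\mathcal{E}$ denotes the class of centred ellipsoids in $\mathbb{R}^n$, i.e. images $A(\mathbb{B})$ of the closed unit ball $\mathbb{B}$ under invertible linear maps $A$. $\mathcal{K}$ denotes the class of centrally symmetric convex bodies in $\mathbb{R}^n$. *)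

theory Defs
  imports "HOL-Analysis.Analysis"
begin

definition centred_ellipsoids :: "'a::euclidean_space set set" where
  "centred_ellipsoids = {A ` cball 0 1 | A :: 'a \<Rightarrow> 'a. linear A \<and> bij A}"

definition sym_convex_bodies :: "'a::euclidean_space set set" where
  "sym_convex_bodies = {K. compact K \<and> convex K \<and> interior K \<noteq> {} \<and> (\<forall>x\<in>K. - x \<in> K)}"

definition sandwiched :: "real \<Rightarrow> 'a::real_vector set \<Rightarrow> 'a set \<Rightarrow> bool" where
  "sandwiched \<alpha> K E \<longleftrightarrow> (\<lambda>x. inverse \<alpha> *\<^sub>R x) ` K \<subseteq> E \<and> E \<subseteq> (\<lambda>x. \<alpha> *\<^sub>R x) ` K"

end

theory Submission
  imports Defs
begin

text \<open>
  Greedily choosing orthonormal directions in which K is widest yields a linear image E of the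
  unit ball with E \<subseteq> 2^n K and K \<subseteq> n E. Hence for \<alpha> \<ge> 2 n 2^n it suffices that every
  ellipsoid lies within factor 2 of some member of the family; we take a Zorn-maximal family of
  ellipsoids no two of which are within factor 2 of each other. Two ellipsoids sandwiching the
  same K are within factor \<alpha>^2 of each other. After normalising one of them to the ball, the
  ellipsoids of the family within factor \<alpha>^2 of it correspond to operators of norm at most
  \<alpha>^2 that are pairwise far apart, so by compactness there are boundedly many of them; a
  greedy (again Zorn-maximal) colouring with one colour more therefore gives such ellipsoids
  distinct colours.
\<close>

definition scaled :: "real \<Rightarrow> 'a::real_vector set \<Rightarrow> 'a set" where
  "scaled t S = (\<lambda>x. t *\<^sub>R x) ` S"

definition sym_convex :: "'a::real_vector set \<Rightarrow> bool" where
  "sym_convex K \<longleftrightarrow> convex K \<and> (\<forall>x\<in>K. - x \<in> K) \<and> K \<noteq> {}"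

lemma scaled_1 [simp]: "scaled 1 S = S"
  unfolding scaled_def by simp

lemma scaled_scaled: "scaled s (scaled t S) = scaled (s * t) S"
  unfolding scaled_def image_image by simp

lemma scaled_mono: "S \<subseteq> T \<Longrightarrow> scaled t S \<subseteq> scaled t T"
  unfolding scaled_def by auto

lemma linear_image_scaled: "linear A \<Longrightarrow> A ` scaled t S = scaled t (A ` S)"
  unfolding scaled_def image_image by (simp add: linear_scale)

lemma sym_convex_zero:
  assumes "sym_convex K" shows "0 \<in> K"
proof -
  obtain x where x: "x \<in> K" "- x \<in> K" using assms unfolding sym_convex_def by auto
  then have "(1/2) *\<^sub>R x + (1/2) *\<^sub>R (- x) \<in> K"
    using assms unfolding sym_convex_def by (intro convexD) auto
  then show ?thesis by simp
qed

lemma sym_convex_scaleR: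
  assumes K: "sym_convex K" and "\<bar>c\<bar> \<le> 1" "x \<in> K"
  shows "c *\<^sub>R x \<in> K"
proof -
  have "\<bar>c\<bar> *\<^sub>R (sgn c *\<^sub>R x) + (1 - \<bar>c\<bar>) *\<^sub>R 0 \<in> K"
  proof (rule convexD)
    show "sgn c *\<^sub>R x \<in> K"
      using assms sym_convex_zero[OF K] unfolding sym_convex_def
      by (cases "c > 0"; cases "c = 0") (auto simp: sgn_real_def)
  qed (use assms sym_convex_zero[OF K] in \<open>auto simp: sym_convex_def\<close>)
  then show ?thesis by (simp add: abs_mult_sgn)
qed

lemma scaled_subset:
  assumes "sym_convex K" "\<bar>c\<bar> \<le> 1" shows "scaled c K \<subseteq> K"
  using sym_convex_scaleR[OF assms] unfolding scaled_def by auto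

lemma scaled_subset_scaled:
  assumes K: "sym_convex K" and "0 \<le> s" "s \<le> t"
  shows "scaled s K \<subseteq> scaled t K"
proof (cases "t = 0")
  case True
  then show ?thesis using assms by simp
next
  case False
  have "scaled s K = scaled t (scaled (s / t) K)" using False by (simp add: scaled_scaled)
  also have "\<dots> \<subseteq> scaled t K" using assms False by (intro scaled_mono scaled_subset) auto
  finally show ?thesis .
qed

lemma scaled_scaleR_mem:
  assumes "sym_convex K" "\<bar>c\<bar> \<le> 1" "x \<in> scaled t K"
  shows "c *\<^sub>R x \<in> scaled t K"
proof -
  have "c *\<^sub>R x \<in> scaled c (scaled t K)" using assms(3) unfolding scaled_def by auto
  also have "\<dots> = scaled t (scaled c K)" by (simp add: scaled_scaled mult.commute)
  also have "\<dots> \<subseteq> scaled t K" by (intro scaled_mono scaled_subset assms)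
  finally show ?thesis .
qed

lemma scaled_add_mem:
  assumes K: "sym_convex K" and "0 \<le> s" "0 \<le> t" "x \<in> scaled s K" "y \<in> scaled t K"
  shows "x + y \<in> scaled (s + t) K"
proof -
  obtain k l where kl: "k \<in> K" "l \<in> K" "x = s *\<^sub>R k" "y = t *\<^sub>R l"
    using assms unfolding scaled_def by auto
  show ?thesis
  proof (cases "s + t = 0")
    case True
    then have "s = 0" "t = 0" using assms by auto
    then show ?thesis using kl sym_convex_zero[OF K] unfolding scaled_def by auto
  next
    case False
    then have st: "s + t > 0" using assms by auto
    have "(s / (s + t)) *\<^sub>R k + (t / (s + t)) *\<^sub>R l \<in> K"
      using K kl assms st unfolding sym_convex_def
      by (intro convexD) (auto simp: add_divide_distrib[symmetric])
    moreover have "x + y = (s + t) *\<^sub>R ((s / (s + t)) *\<^sub>R k + (t / (s + t)) *\<^sub>R l)"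
      using kl st by (simp add: scaleR_add_right)
    ultimately show ?thesis unfolding scaled_def by auto
  qed
qed

lemma scaled_sum_mem:
  assumes K: "sym_convex K" and "finite I" "\<And>i. i \<in> I \<Longrightarrow> 0 \<le> t i \<and> v i \<in> scaled (t i) K"
  shows "sum v I \<in> scaled (sum t I) K"
  using assms(2,3)
proof (induction I rule: finite_induct)
  case empty
  then show ?case using sym_convex_zero[OF K] unfolding scaled_def by auto
next
  case (insert i I)
  then show ?case by (auto intro!: scaled_add_mem[OF K] sum_nonneg)
qed

lemma sym_convex_linear_image_cball:
  fixes A :: "'a::real_normed_vector \<Rightarrow> 'b::real_normed_vector"
  assumes "linear A" shows "sym_convex (A ` cball 0 1)"
proof -
  have "- A z \<in> A ` cball 0 1" if "z \<in> cball 0 1" for z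
    using that assms by (auto simp: linear_neg[symmetric] intro!: image_eqI)
  then show ?thesis
    unfolding sym_convex_def using assms by (auto intro: convex_linear_image)
qed

lemma sym_convex_centred_ellipsoid: "E \<in> centred_ellipsoids \<Longrightarrow> sym_convex E"
  unfolding centred_ellipsoids_def using sym_convex_linear_image_cball by blast

lemma sym_convex_body: "K \<in> sym_convex_bodies \<Longrightarrow> sym_convex K"
  unfolding sym_convex_bodies_def sym_convex_def by auto

lemma ball_subset_sym_convex_body:
  fixes K :: "'a::euclidean_space set"
  assumes "K \<in> sym_convex_bodies"
  obtains \<rho> where "\<rho> > 0" "ball 0 \<rho> \<subseteq> K"
proof -
  have K: "convex K" "uminus ` K = K" "interior K \<noteq> {}"
    using assms unfolding sym_convex_bodies_def by (auto simp: image_iff intro: minus_minus[symmetric])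
  then obtain x where "x \<in> interior K" "- x \<in> interior K"
    using interior_negations[of K] by (metis ex_in_conv image_eqI)
  then have "(1/2) *\<^sub>R x + (1/2) *\<^sub>R (- x) \<in> interior K"
    using K(1) by (intro convexD) auto
  then have "0 \<in> interior K" by simp
  then show ?thesis using that mem_interior by (metis subset_trans ball_subset_cball)
qed

definition orthonormal_upto :: "nat \<Rightarrow> (nat \<Rightarrow> 'a::real_inner) \<Rightarrow> bool" where
  "orthonormal_upto k u \<longleftrightarrow> (\<forall>i<k. \<forall>j<k. u i \<bullet> u j = (if i = j then 1 else 0))"

definition perp_part :: "nat \<Rightarrow> (nat \<Rightarrow> 'a::real_inner) \<Rightarrow> 'a \<Rightarrow> 'a" where
  "perp_part k u y = y - (\<Sum>j<k. (y \<bullet> u j) *\<^sub>R u j)"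

lemma orthonormal_upto_extend:
  assumes "orthonormal_upto k u" "v \<bullet> v = 1" "\<And>i. i < k \<Longrightarrow> v \<bullet> u i = 0"
  shows "orthonormal_upto (Suc k) (u(k := v))"
  using assms unfolding orthonormal_upto_def by (auto simp: less_Suc_eq inner_commute)

lemma norm_orthonormal_upto: "orthonormal_upto k u \<Longrightarrow> i < k \<Longrightarrow> norm (u i) = 1"
  unfolding orthonormal_upto_def by (simp add: norm_eq_sqrt_inner)

lemma inner_sum_orthonormal_upto:
  assumes "orthonormal_upto k u" "i < k"
  shows "(\<Sum>j<k. c j *\<^sub>R u j) \<bullet> u i = c i"
proof -
  have "(\<Sum>j<k. c j *\<^sub>R u j) \<bullet> u i = (\<Sum>j<k. c j * (u j \<bullet> u i))"
    by (simp add: inner_sum_left)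
  also have "\<dots> = (\<Sum>j<k. if j = i then c i else 0)"
    using assms unfolding orthonormal_upto_def by (intro sum.cong) auto
  also have "\<dots> = c i" using assms(2) by simp
  finally show ?thesis .
qed

lemma perp_part_orthogonal: "orthonormal_upto k u \<Longrightarrow> i < k \<Longrightarrow> perp_part k u y \<bullet> u i = 0"
  unfolding perp_part_def using inner_sum_orthonormal_upto[of k u i "\<lambda>j. y \<bullet> u j"]
  by (simp add: inner_diff_left)

lemma linear_perp_part: "linear (perp_part k u)"
  unfolding perp_part_def
  by (intro linear_compose_sub linear_ident linear_compose_sum)
     (auto intro!: linearI simp: inner_add_left scaleR_add_left)

lemma inner_perp_part:
  assumes "\<And>i. i < k \<Longrightarrow> u i \<bullet> v = 0"
  shows "perp_part k u y \<bullet> v = y \<bullet> v"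
  using assms unfolding perp_part_def by (simp add: inner_diff_left inner_sum_left)

lemma perp_part_nonzero_imp_less_DIM:
  fixes u :: "nat \<Rightarrow> 'a::euclidean_space"
  assumes u: "orthonormal_upto k u" and z: "perp_part k u y \<noteq> 0"
  shows "k < DIM('a)"
proof -
  define S where "S = insert (perp_part k u y) (u ` {..<k})"
  have "inj_on u {..<k}"
    using u unfolding orthonormal_upto_def by (metis inj_onI lessThan_iff zero_neq_one)
  moreover have "perp_part k u y \<notin> u ` {..<k}"
  proof
    assume "perp_part k u y \<in> u ` {..<k}"
    then obtain i where "i < k" "perp_part k u y = u i" by auto
    then show False using perp_part_orthogonal[OF u, of i y] u unfolding orthonormal_upto_def by auto
  qed
  ultimately have "card S = Suc k" unfolding S_def by (simp add: card_image)
  moreover have "pairwise orthogonal S"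
    using u perp_part_orthogonal[OF u]
    unfolding S_def pairwise_def orthogonal_def orthonormal_upto_def by (auto simp: inner_commute)
  moreover have "0 \<notin> S"
    using z norm_orthonormal_upto[OF u] unfolding S_def by force
  ultimately show ?thesis
    using pairwise_orthogonal_independent independent_bound by (metis Suc_le_lessD)
qed

lemma orthonormal_upto_DIM_expansion:
  fixes u :: "nat \<Rightarrow> 'a::euclidean_space"
  assumes "orthonormal_upto DIM('a) u"
  shows "(\<Sum>i<DIM('a). (y \<bullet> u i) *\<^sub>R u i) = y"
  using perp_part_nonzero_imp_less_DIM[OF assms, of y] unfolding perp_part_def
  by (metis eq_iff_diff_eq_0 less_irrefl)

lemma perp_part_nonzero:
  fixes u :: "nat \<Rightarrow> 'a::euclidean_space"
  assumes "k < DIM('a)"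
  obtains y where "perp_part k u y \<noteq> 0"
proof -
  have "\<not> Basis \<subseteq> span (u ` {..<k})"
  proof
    assume "Basis \<subseteq> span (u ` {..<k})"
    then have "card (Basis :: 'a set) \<le> card (u ` {..<k})"
      using independent_span_bound[OF _ independent_Basis, of "u ` {..<k}"] by auto
    also have "\<dots> \<le> k" using card_image_le[of "{..<k}" u] by simp
    finally show False using assms by simp
  qed
  then obtain y where "y \<notin> span (u ` {..<k})" by blast
  moreover have "(\<Sum>j<k. (y \<bullet> u j) *\<^sub>R u j) \<in> span (u ` {..<k})"
    by (intro span_sum span_scale span_base) auto
  ultimately show ?thesis using that[of y] unfolding perp_part_def by force
qed

lemma linear_nonzero_on_ball:
  fixes f :: "'a::real_normed_vector \<Rightarrow> 'b::real_vector"
  assumes f: "linear f" "f y \<noteq> 0" and "0 < \<rho>" "ball 0 \<rho> \<subseteq> K"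
  obtains x where "x \<in> K" "f x \<noteq> 0"
proof -
  define c where "c = \<rho> / (2 * norm y)"
  have "y \<noteq> 0" using f linear_0 by auto
  then have "c > 0" "norm (c *\<^sub>R y) < \<rho>" using \<open>0 < \<rho>\<close> by (auto simp: c_def)
  then show ?thesis
    using that[of "c *\<^sub>R y"] assms by (auto simp: linear_scale dest: subsetD[of _ _ "c *\<^sub>R y"])
qed

text \<open>The outcome of greedily choosing, orthogonally to the earlier ones, a direction u i in which
  K is widest: a i is that width, and it is attained by a point of 2^i K.\<close>

definition adapted_frame :: "'a::real_inner set \<Rightarrow> nat \<Rightarrow> (nat \<Rightarrow> 'a) \<Rightarrow> (nat \<Rightarrow> real) \<Rightarrow> bool" where
  "adapted_frame K k u a \<longleftrightarrow> orthonormal_upto k u \<and>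
     (\<forall>i<k. 0 < a i \<and> a i *\<^sub>R u i \<in> scaled (2^i) K) \<and> (\<forall>y\<in>K. \<forall>i<k. \<bar>y \<bullet> u i\<bar> \<le> a i)"

lemma sum_pow2_lessThan: "(\<Sum>j<k. (2::real)^j) = 2^k - 1"
  by (induction k) auto

lemma adapted_frame_sum_mem:
  assumes K: "sym_convex K" and fr: "adapted_frame K k u a" and c: "\<And>j. j < k \<Longrightarrow> \<bar>c j\<bar> \<le> a j"
  shows "(\<Sum>j<k. c j *\<^sub>R u j) \<in> scaled (2^k - 1) K"
proof -
  have "c j *\<^sub>R u j \<in> scaled (2^j) K" if "j < k" for j
  proof -
    have a: "0 < a j" "a j *\<^sub>R u j \<in> scaled (2^j) K" using fr that unfolding adapted_frame_def by auto
    then have "\<bar>c j / a j\<bar> \<le> 1" using c[OF that] by (simp add: abs_divide)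
    from scaled_scaleR_mem[OF K this a(2)] show ?thesis using a(1) by simp
  qed
  then have "(\<Sum>j<k. c j *\<^sub>R u j) \<in> scaled (\<Sum>j<k. 2^j) K"
    by (intro scaled_sum_mem[OF K]) auto
  then show ?thesis by (simp add: sum_pow2_lessThan)
qed

lemma perp_part_mem_scaled:
  assumes K: "sym_convex K" and fr: "adapted_frame K k u a" and "x \<in> K"
  shows "perp_part k u x \<in> scaled (2^k) K"
proof -
  have "perp_part k u x = x + (\<Sum>j<k. (- (x \<bullet> u j)) *\<^sub>R u j)"
    unfolding perp_part_def by (simp add: sum_negf)
  also have "\<dots> \<in> scaled (1 + (2^k - 1)) K"
    using fr \<open>x \<in> K\<close> unfolding adapted_frame_def
    by (intro scaled_add_mem K adapted_frame_sum_mem[OF K fr]) auto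
  finally show ?thesis by simp
qed

lemma adapted_frame_extend:
  fixes K :: "'a::euclidean_space set"
  assumes K: "sym_convex K" "compact K" "0 < \<rho>" "ball 0 \<rho> \<subseteq> K"
    and fr: "adapted_frame K k u a" and k: "k < DIM('a)"
  obtains v b where "adapted_frame K (Suc k) (u(k := v)) (a(k := b))"
proof -
  let ?p = "perp_part k u"
  have u: "orthonormal_upto k u" using fr unfolding adapted_frame_def by blast
  obtain x0 where "x0 \<in> K" "?p x0 \<noteq> 0"
    using perp_part_nonzero[OF k] linear_nonzero_on_ball[OF linear_perp_part _ K(3,4)] by metis
  moreover have "continuous_on K (\<lambda>y. norm (?p y))"
    unfolding perp_part_def by (intro continuous_intros)
  ultimately obtain x where x: "x \<in> K" "\<And>y. y \<in> K \<Longrightarrow> norm (?p y) \<le> norm (?p x)"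
    using continuous_attains_sup[OF K(2)] by (metis empty_iff)
  define b where "b = norm (?p x)"
  define v where "v = (1 / b) *\<^sub>R ?p x"
  have b: "0 < b" using x \<open>x0 \<in> K\<close> \<open>?p x0 \<noteq> 0\<close> unfolding b_def
    by (metis zero_less_norm_iff order_less_le_trans)
  have vv: "v \<bullet> v = 1" and nv: "norm v = 1"
    using b unfolding v_def b_def by (auto simp: norm_eq_sqrt_inner[symmetric] power2_norm_eq_inner[symmetric])
  have vu: "v \<bullet> u i = 0" and uv: "u i \<bullet> v = 0" if "i < k" for i
    unfolding v_def using perp_part_orthogonal[OF u that] by (simp_all add: inner_commute)
  have bv: "b *\<^sub>R v \<in> scaled (2^k) K"
    using b perp_part_mem_scaled[OF K(1) fr x(1)] unfolding v_def by simp
  have "\<bar>y \<bullet> v\<bar> \<le> b" if "y \<in> K" for y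
  proof -
    have "\<bar>y \<bullet> v\<bar> = \<bar>?p y \<bullet> v\<bar>" by (simp add: inner_perp_part uv)
    also have "\<dots> \<le> norm (?p y)" using Cauchy_Schwarz_ineq2[of "?p y" v] nv by simp
    also have "\<dots> \<le> b" using x that unfolding b_def by simp
    finally show ?thesis .
  qed
  then have "adapted_frame K (Suc k) (u(k := v)) (a(k := b))"
    using fr b bv orthonormal_upto_extend[OF u vv vu]
    unfolding adapted_frame_def by (auto simp: less_Suc_eq)
  then show ?thesis by (rule that)
qed

lemma adapted_frame_exists:
  fixes K :: "'a::euclidean_space set"
  assumes "sym_convex K" "compact K" "0 < \<rho>" "ball 0 \<rho> \<subseteq> K" "k \<le> DIM('a)"
  shows "\<exists>u a. adapted_frame K k u a"
  using assms(5)
proof (induction k)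
  case 0
  show ?case unfolding adapted_frame_def orthonormal_upto_def by auto
next
  case (Suc k)
  then obtain u a where "adapted_frame K k u a" by auto
  from adapted_frame_extend[OF assms(1-4) this] Suc.prems show ?case by (metis Suc_le_lessD)
qed

definition frame_map :: "(nat \<Rightarrow> real) \<Rightarrow> (nat \<Rightarrow> 'a::euclidean_space) \<Rightarrow> 'a \<Rightarrow> 'a" where
  "frame_map a u y = (\<Sum>i<DIM('a). (a i * (y \<bullet> u i)) *\<^sub>R u i)"

lemma linear_frame_map: "linear (frame_map a u)"
  unfolding frame_map_def
  by (intro linear_compose_sum) (auto intro!: linearI simp: inner_add_left algebra_simps)

lemma frame_map_frame_map:
  fixes u :: "nat \<Rightarrow> 'a::euclidean_space"
  assumes u: "orthonormal_upto DIM('a) u" and ab: "\<And>i. i < DIM('a) \<Longrightarrow> a i * b i = 1"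
  shows "frame_map a u (frame_map b u y) = y"
proof -
  have "frame_map b u y \<bullet> u i = b i * (y \<bullet> u i)" if "i < DIM('a)" for i
    unfolding frame_map_def by (rule inner_sum_orthonormal_upto[OF u that])
  then have "frame_map a u (frame_map b u y) = (\<Sum>i<DIM('a). (y \<bullet> u i) *\<^sub>R u i)"
    unfolding frame_map_def[of a] using ab by (auto simp: mult.assoc[symmetric] intro!: sum.cong)
  then show ?thesis by (simp add: orthonormal_upto_DIM_expansion[OF u])
qed

lemma bij_frame_map:
  fixes u :: "nat \<Rightarrow> 'a::euclidean_space"
  assumes "orthonormal_upto DIM('a) u" "\<And>i. i < DIM('a) \<Longrightarrow> a i \<noteq> 0"
  shows "bij (frame_map a u)"
  by (rule o_bij[of "frame_map (\<lambda>i. 1 / a i) u"]) (auto simp: fun_eq_iff frame_map_frame_map assms)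

lemma frame_map_cball_subset:
  fixes K :: "'a::euclidean_space set"
  assumes K: "sym_convex K" and fr: "adapted_frame K DIM('a) u a"
  shows "frame_map a u ` cball 0 1 \<subseteq> scaled (2 ^ DIM('a)) K"
proof clarify
  fix z :: 'a assume "z \<in> cball 0 1"
  have "\<bar>a i * (z \<bullet> u i)\<bar> \<le> a i" if "i < DIM('a)" for i
  proof -
    have "norm (u i) = 1" using fr that unfolding adapted_frame_def by (blast intro: norm_orthonormal_upto)
    then have "\<bar>z \<bullet> u i\<bar> \<le> 1"
      using Cauchy_Schwarz_ineq2[of z "u i"] \<open>z \<in> cball 0 1\<close> by simp
    moreover have "0 < a i" using fr that unfolding adapted_frame_def by blast
    ultimately show ?thesis by (simp add: abs_mult mult_left_le)
  qed
  then have "frame_map a u z \<in> scaled (2 ^ DIM('a) - 1) K"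
    unfolding frame_map_def by (rule adapted_frame_sum_mem[OF K fr])
  also have "\<dots> \<subseteq> scaled (2 ^ DIM('a)) K" by (intro scaled_subset_scaled K) auto
  finally show "frame_map a u z \<in> scaled (2 ^ DIM('a)) K" .
qed

lemma subset_scaled_frame_map_cball:
  fixes K :: "'a::euclidean_space set"
  assumes fr: "adapted_frame K DIM('a) u a"
  shows "K \<subseteq> scaled DIM('a) (frame_map a u ` cball 0 1)"
proof
  let ?n = "DIM('a)"
  have u: "orthonormal_upto ?n u" and a: "\<And>i. i < ?n \<Longrightarrow> 0 < a i"
    and width: "\<And>y i. y \<in> K \<Longrightarrow> i < ?n \<Longrightarrow> \<bar>y \<bullet> u i\<bar> \<le> a i"
    using fr unfolding adapted_frame_def by auto
  fix y assume "y \<in> K"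
  define z where "z = frame_map (\<lambda>i. 1 / a i) u y"
  have "norm z \<le> (\<Sum>i<?n. norm ((1 / a i * (y \<bullet> u i)) *\<^sub>R u i))"
    unfolding z_def frame_map_def by (rule norm_sum)
  also have "\<dots> \<le> (\<Sum>i<?n. 1)"
    using width[OF \<open>y \<in> K\<close>] a norm_orthonormal_upto[OF u]
    by (intro sum_mono) (simp add: abs_of_pos a divide_le_eq_1_pos)
  finally have "norm ((1 / ?n) *\<^sub>R z) \<le> 1" by (simp add: field_simps)
  moreover have "y = ?n *\<^sub>R frame_map a u ((1 / ?n) *\<^sub>R z)"
    using frame_map_frame_map[OF u, of a "\<lambda>i. 1 / a i"] a
    by (simp add: z_def linear_scale[OF linear_frame_map] less_imp_neq[OF a, symmetric])
  ultimately show "y \<in> scaled ?n (frame_map a u ` cball 0 1)" unfolding scaled_def by auto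
qed

lemma exists_ellipsoid_between:
  fixes K :: "'a::euclidean_space set"
  assumes "K \<in> sym_convex_bodies"
  obtains A :: "'a \<Rightarrow> 'a" where "linear A" "bij A"
    "A ` cball 0 1 \<subseteq> scaled (2 ^ DIM('a)) K" "K \<subseteq> scaled (real DIM('a)) (A ` cball 0 1)"
proof -
  obtain \<rho> where \<rho>: "0 < \<rho>" "ball 0 \<rho> \<subseteq> K" by (rule ball_subset_sym_convex_body[OF assms])
  have K: "sym_convex K" "compact K"
    using assms sym_convex_body unfolding sym_convex_bodies_def by auto
  obtain u a where fr: "adapted_frame K DIM('a) u a"
    using adapted_frame_exists[OF K \<rho> order_refl] by blast
  then have "bij (frame_map a u)"
    by (intro bij_frame_map) (auto simp: adapted_frame_def less_imp_neq[symmetric])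
  then show ?thesis
    using that linear_frame_map frame_map_cball_subset[OF K(1) fr] subset_scaled_frame_map_cball[OF fr]
    by blast
qed

definition near :: "real \<Rightarrow> 'a::real_vector set \<Rightarrow> 'a set \<Rightarrow> bool" where
  "near t E F \<longleftrightarrow> E \<subseteq> scaled t F \<and> F \<subseteq> scaled t E"

lemma near_sym: "near t E F \<longleftrightarrow> near t F E"
  unfolding near_def by auto

lemma near_refl: "sym_convex E \<Longrightarrow> 1 \<le> t \<Longrightarrow> near t E E"
  unfolding near_def using scaled_subset_scaled[of E 1 t] by simp

lemma near_linear_image:
  assumes "linear A" "inj A"
  shows "near t (A ` E) (A ` F) \<longleftrightarrow> near t E F"
  unfolding near_def linear_image_scaled[OF assms(1), symmetric] inj_image_subset_iff[OF assms(2)] ..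

lemma centred_ellipsoid_linear_image:
  fixes A :: "'a::euclidean_space \<Rightarrow> 'a"
  assumes "linear A" "bij A" "E \<in> centred_ellipsoids"
  shows "A ` E \<in> centred_ellipsoids"
proof -
  obtain B :: "'a \<Rightarrow> 'a" where "linear B" "bij B" "E = B ` cball 0 1"
    using assms(3) unfolding centred_ellipsoids_def by blast
  then have "A ` E = (A \<circ> B) ` cball 0 1" "linear (A \<circ> B)" "bij (A \<circ> B)"
    using assms by (auto simp: image_comp intro: linear_compose bij_comp)
  then show ?thesis unfolding centred_ellipsoids_def by (metis (mono_tags, lifting) mem_Collect_eq)
qed

lemma image_cball_subset_of_dist_blinfun:
  fixes P Q :: "'a::real_normed_vector \<Rightarrow>\<^sub>L 'b::real_normed_vector"
  assumes R: "0 < R" and Q: "cball 0 1 \<subseteq> scaled R (Q ` cball 0 1)" and PQ: "dist P Q \<le> 1 / R"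
  shows "P ` cball 0 1 \<subseteq> scaled 2 (Q ` cball 0 1)"
proof
  fix y assume "y \<in> P ` cball 0 1"
  then obtain z where z: "norm z \<le> 1" "y = P z" by auto
  have "norm ((P - Q) z) \<le> norm (P - Q) * norm z" by (rule norm_blinfun)
  also have "\<dots> \<le> 1 / R * 1" using PQ z R by (intro mult_mono) (auto simp: dist_norm)
  finally have "norm ((P - Q) z) \<le> 1 / R" by simp
  then have "R *\<^sub>R (P - Q) z \<in> scaled R (Q ` cball 0 1)" using R Q by (auto simp: field_simps)
  then obtain w where w: "norm w \<le> 1" "(P - Q) z = Q w"
    using R unfolding scaled_def by auto
  have "y = Q z + (P - Q) z" by (simp add: z blinfun.diff_left)
  also have "\<dots> = Q z + Q w" by (simp only: w(2))
  also have "\<dots> = 2 *\<^sub>R Q ((1/2) *\<^sub>R (z + w))" by (simp add: blinfun.add_right blinfun.scaleR_right)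
  finally have y: "y = 2 *\<^sub>R Q ((1/2) *\<^sub>R (z + w))" .
  have "norm ((1/2) *\<^sub>R (z + w)) \<le> 1" using z w norm_triangle_ineq[of z w] by simp
  then show "y \<in> scaled 2 (Q ` cball 0 1)" unfolding scaled_def using y by auto
qed

lemma near_of_dist_blinfun:
  fixes P Q :: "'a::real_normed_vector \<Rightarrow>\<^sub>L 'b::real_normed_vector"
  assumes "0 < R" "cball 0 1 \<subseteq> scaled R (P ` cball 0 1)" "cball 0 1 \<subseteq> scaled R (Q ` cball 0 1)"
    and "dist P Q \<le> 1 / R"
  shows "near 2 (P ` cball 0 1) (Q ` cball 0 1)"
  using image_cball_subset_of_dist_blinfun[of R Q P] image_cball_subset_of_dist_blinfun[of R P Q] assms
  unfolding near_def by (simp add: dist_commute)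

lemma blinfun_of_centred_ellipsoid_near_cball:
  fixes E :: "'a::euclidean_space set"
  assumes "E \<in> centred_ellipsoids" "0 \<le> R" "near R (cball 0 1) E"
  obtains M :: "'a \<Rightarrow>\<^sub>L 'a" where "M ` cball 0 1 = E" "norm M \<le> R"
proof -
  obtain B :: "'a \<Rightarrow> 'a" where B: "linear B" "E = B ` cball 0 1"
    using assms(1) unfolding centred_ellipsoids_def by auto
  have bound: "norm (B x) \<le> R" if "norm x \<le> 1" for x
  proof -
    have "B x \<in> scaled R (cball 0 1)" using assms(3) that unfolding B(2) near_def by auto
    then obtain w where "norm w \<le> 1" "B x = R *\<^sub>R w" unfolding scaled_def by auto
    then show ?thesis using assms(2) by (simp add: mult_left_le)
  qed
  have BB: "blinfun_apply (Blinfun B) = B"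
    using B(1) by (simp add: bounded_linear_Blinfun_apply linear_conv_bounded_linear)
  have "norm (Blinfun B) \<le> R"
  proof (rule norm_blinfun_bound)
    show "0 \<le> R" by (rule assms(2))
    show "norm (Blinfun B x) \<le> R * norm x" for x
    proof (cases "x = 0")
      case False
      have "norm (B ((1 / norm x) *\<^sub>R x)) \<le> R" using False by (intro bound) simp
      then show ?thesis using False B(1) by (simp add: BB linear_scale field_simps)
    qed (use B(1) BB in \<open>simp add: linear_0\<close>)
  qed
  then show ?thesis using that[of "Blinfun B"] BB B(2) by simp
qed

lemma finite_card_le_covering_balls:
  fixes M :: "'b \<Rightarrow> 'c::metric_space"
  assumes C: "finite C" "M ` X \<subseteq> (\<Union>c\<in>C. ball c r)"
    and sep: "\<And>x y. x \<in> X \<Longrightarrow> y \<in> X \<Longrightarrow> dist (M x) (M y) < 2 * r \<Longrightarrow> x = y"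
  shows "finite X \<and> card X \<le> card C"
proof -
  have "\<forall>x\<in>X. \<exists>c. c \<in> C \<and> dist c (M x) < r" using C(2) by fastforce
  from bchoice[OF this] obtain g where g: "\<forall>x\<in>X. g x \<in> C \<and> dist (g x) (M x) < r" by blast
  have inj: "inj_on g X"
  proof
    fix x y assume xy: "x \<in> X" "y \<in> X" "g x = g y"
    then have "dist (g x) (M x) < r" "dist (g x) (M y) < r" using g by auto
    then show "x = y" using sep[OF xy(1,2)] dist_triangle3[of "M x" "M y" "g x"] by linarith
  qed
  have gX: "g ` X \<subseteq> C" using g by auto
  show ?thesis
    using finite_imageD[OF finite_subset[OF gX C(1)] inj] card_inj_on_le[OF inj gX C(1)] by blast
qed

lemma finite_near_cball_in_separated:
  fixes R :: real
  assumes R: "0 < R"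
  obtains N :: nat where
    "\<And>S :: 'a::euclidean_space set set. S \<subseteq> centred_ellipsoids \<Longrightarrow> pairwise (\<lambda>E F. \<not> near 2 E F) S \<Longrightarrow>
       finite {E\<in>S. near R (cball 0 1) E} \<and> card {E\<in>S. near R (cball 0 1) E} \<le> N"
proof -
  obtain C :: "('a \<Rightarrow>\<^sub>L 'a) set" where C: "finite C" "cball 0 R \<subseteq> (\<Union>c\<in>C. ball c (1 / (2 * R)))"
  proof (rule compactE_image[OF compact_cball, of "cball 0 R" "\<lambda>c. ball c (1 / (2 * R))"])
    show "cball 0 R \<subseteq> (\<Union>c\<in>cball 0 R. ball c (1 / (2 * R)))" using R by force
  qed auto
  have "finite {E\<in>S. near R (cball 0 1) E} \<and> card {E\<in>S. near R (cball 0 1) E} \<le> card C"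
    if S: "S \<subseteq> centred_ellipsoids" "pairwise (\<lambda>E F. \<not> near 2 E F) S" for S :: "'a set set"
  proof -
    define X where "X = {E\<in>S. near R (cball 0 1) E}"
    have "\<forall>E\<in>X. \<exists>M :: 'a \<Rightarrow>\<^sub>L 'a. blinfun_apply M ` cball 0 1 = E \<and> norm M \<le> R"
    proof
      fix E assume "E \<in> X"
      then have "E \<in> centred_ellipsoids" "near R (cball 0 1) E" using S(1) unfolding X_def by auto
      from blinfun_of_centred_ellipsoid_near_cball[OF this(1) less_imp_le[OF R] this(2)]
      show "\<exists>M :: 'a \<Rightarrow>\<^sub>L 'a. blinfun_apply M ` cball 0 1 = E \<and> norm M \<le> R" by blast
    qed
    from bchoice[OF this] obtain M :: "'a set \<Rightarrow> 'a \<Rightarrow>\<^sub>L 'a"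
      where M: "\<forall>E\<in>X. blinfun_apply (M E) ` cball 0 1 = E \<and> norm (M E) \<le> R" by blast
    have img: "blinfun_apply (M E) ` cball 0 1 = E" and cover: "cball 0 1 \<subseteq> scaled R E"
      if "E \<in> X" for E
      using M that unfolding X_def near_def by auto
    have sep: "E1 = E2" if E: "E1 \<in> X" "E2 \<in> X" and d: "dist (M E1) (M E2) < 2 * (1 / (2 * R))" for E1 E2
    proof -
      have "near 2 (M E1 ` cball 0 1) (M E2 ` cball 0 1)"
        by (rule near_of_dist_blinfun[OF R]) (use d R in \<open>simp_all add: img cover E\<close>)
      then have "near 2 E1 E2" by (simp add: img E)
      then show "E1 = E2" using S(2) E unfolding X_def pairwise_def by blast
    qed
    have "M ` X \<subseteq> cball 0 R" using M by auto
    then have "M ` X \<subseteq> (\<Union>c\<in>C. ball c (1 / (2 * R)))" using C(2) by (rule order_trans)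
    from finite_card_le_covering_balls[OF C(1) this sep] show ?thesis unfolding X_def .
  qed
  then show ?thesis by (rule that)
qed

lemma finite_near_in_separated:
  fixes R :: real
  assumes R: "0 < R"
  obtains N :: nat where
    "\<And>(S :: 'a::euclidean_space set set) F. S \<subseteq> centred_ellipsoids \<Longrightarrow> pairwise (\<lambda>E F. \<not> near 2 E F) S \<Longrightarrow>
       F \<in> centred_ellipsoids \<Longrightarrow> finite {E\<in>S. near R F E} \<and> card {E\<in>S. near R F E} \<le> N"
proof -
  obtain N where N: "\<And>S :: 'a set set. S \<subseteq> centred_ellipsoids \<Longrightarrow> pairwise (\<lambda>E F. \<not> near 2 E F) S \<Longrightarrow>
       finite {E\<in>S. near R (cball 0 1) E} \<and> card {E\<in>S. near R (cball 0 1) E} \<le> N"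
    using finite_near_cball_in_separated[OF R, where 'a='a] by blast
  have "finite {E\<in>S. near R F E} \<and> card {E\<in>S. near R F E} \<le> N"
    if S: "S \<subseteq> centred_ellipsoids" "pairwise (\<lambda>E F. \<not> near 2 E F) S" and F: "F \<in> centred_ellipsoids"
    for S and F :: "'a set"
  proof -
    obtain A :: "'a \<Rightarrow> 'a" where A: "linear A" "bij A" "F = A ` cball 0 1"
      using F unfolding centred_ellipsoids_def by blast
    define T where "T = inv A"
    have T: "linear T" "bij T" "inj T"
      using A by (simp_all add: T_def bij_imp_bij_inv bij_is_inj inj_linear_imp_inv_linear)
    have TF: "T ` F = cball 0 1" using A by (simp add: T_def image_inv_f_f bij_is_inj)
    have ell: "(`) T ` S \<subseteq> centred_ellipsoids"
      using S(1) centred_ellipsoid_linear_image[OF T(1,2)] by auto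
    have sep: "pairwise (\<lambda>E F. \<not> near 2 E F) ((`) T ` S)"
      using S(2) unfolding pairwise_image by (simp add: pairwise_def near_linear_image[OF T(1,3)])
    have "near R (cball 0 1) (T ` E) \<longleftrightarrow> near R F E" for E
      using near_linear_image[OF T(1,3), of R F E] TF by simp
    then have image_eq: "(`) T ` {E\<in>S. near R F E} = {E\<in>(`) T ` S. near R (cball 0 1) E}"
      by auto
    have inj: "inj_on ((`) T) {E\<in>S. near R F E}"
      using T(3) by (simp add: inj_on_def inj_image_eq_iff)
    show ?thesis
      using N[OF ell sep] finite_image_iff[OF inj] card_image[OF inj] unfolding image_eq by simp
  qed
  then show ?thesis by (rule that)
qed

text \<open>Partial colourings of U with colours 0..N are encoded by their graphs M.\<close>

definition coloured_packing ::
    "('b \<Rightarrow> 'b \<Rightarrow> bool) \<Rightarrow> ('b \<Rightarrow> 'b \<Rightarrow> bool) \<Rightarrow> 'b set \<Rightarrow> nat \<Rightarrow> ('b \<times> nat) set \<Rightarrow> bool" where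
  "coloured_packing close conflict U N M \<longleftrightarrow> M \<subseteq> U \<times> {..N} \<and>
     pairwise (\<lambda>p q. \<not> close (fst p) (fst q) \<and> (snd p = snd q \<longrightarrow> \<not> conflict (fst p) (fst q))) M"

lemma inj_on_fst_coloured_packing:
  assumes M: "coloured_packing close conflict U N M" and close_refl: "\<And>x. x \<in> U \<Longrightarrow> close x x"
  shows "inj_on fst M"
proof
  fix p q assume "p \<in> M" "q \<in> M" "fst p = fst q"
  moreover have "fst p \<in> U" using M \<open>p \<in> M\<close> unfolding coloured_packing_def by auto
  ultimately show "p = q" using M close_refl unfolding coloured_packing_def pairwise_def by metis
qed

lemma exists_nat_le_notin_image:
  assumes "finite P" "card P \<le> N"
  obtains c :: nat where "c \<le> N" "c \<notin> f ` P"
proof -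
  have "card (f ` P) \<le> N" using card_image_le[OF assms(1), of f] assms(2) by linarith
  then have "\<not> {..N} \<subseteq> f ` P" using card_mono[of "f ` P" "{..N}"] assms(1) by auto
  then show ?thesis using that by auto
qed

lemma coloured_packing_extend:
  assumes M: "coloured_packing close conflict U N M"
    and close_refl: "\<And>x. x \<in> U \<Longrightarrow> close x x"
    and close_sym: "\<And>x y. close x y \<Longrightarrow> close y x"
    and conflict_sym: "\<And>x y. conflict x y \<Longrightarrow> conflict y x"
    and few_conflicts: "\<And>S x. S \<subseteq> U \<Longrightarrow> pairwise (\<lambda>y z. \<not> close y z) S \<Longrightarrow> x \<in> U \<Longrightarrow>
       finite {y\<in>S. conflict x y} \<and> card {y\<in>S. conflict x y} \<le> N"
    and x: "x \<in> U" "\<And>p. p \<in> M \<Longrightarrow> \<not> close x (fst p)"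
  obtains c where "coloured_packing close conflict U N (insert (x, c) M)"
proof -
  have MU: "M \<subseteq> U \<times> {..N}" and sep: "pairwise (\<lambda>p q. \<not> close (fst p) (fst q)) M"
    using M unfolding coloured_packing_def by (auto intro: pairwise_mono)
  define Y where "Y = {y\<in>fst ` M. conflict x y}"
  have "fst ` M \<subseteq> U" using MU by auto
  moreover have "pairwise (\<lambda>y z. \<not> close y z) (fst ` M)"
    using sep unfolding pairwise_image by (simp add: pairwise_def)
  ultimately have Y: "finite Y" "card Y \<le> N"
    using few_conflicts x(1) unfolding Y_def by blast+
  define P where "P = {p\<in>M. fst p \<in> Y}"
  have inj: "inj_on fst P" and PY: "fst ` P \<subseteq> Y"
    using inj_on_fst_coloured_packing[OF M close_refl] unfolding P_def by (auto intro: inj_on_subset)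
  have "finite P" by (rule finite_imageD[OF finite_subset[OF PY Y(1)] inj])
  moreover have "card P \<le> N" using card_inj_on_le[OF inj PY Y(1)] Y(2) by linarith
  ultimately obtain c where c: "c \<le> N" "c \<notin> snd ` P" by (rule exists_nat_le_notin_image)
  have no_conflict: "\<not> conflict x (fst p)" if "p \<in> M" "snd p = c" for p
  proof
    assume "conflict x (fst p)"
    then have "p \<in> P" using that(1) unfolding P_def Y_def by auto
    then show False using c(2) that(2) by (metis image_eqI)
  qed
  have "\<not> close x (fst p) \<and> \<not> close (fst p) x \<and>
      (snd p = c \<longrightarrow> \<not> conflict x (fst p) \<and> \<not> conflict (fst p) x)" if "p \<in> M" for p
    using x(2) no_conflict close_sym conflict_sym that by blast
  then have "coloured_packing close conflict U N (insert (x, c) M)"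
    using M x(1) c(1) unfolding coloured_packing_def pairwise_insert by auto
  then show ?thesis by (rule that)
qed

lemma exists_coloured_net:
  assumes close_refl: "\<And>x. x \<in> U \<Longrightarrow> close x x"
    and close_sym: "\<And>x y. close x y \<Longrightarrow> close y x"
    and conflict_sym: "\<And>x y. conflict x y \<Longrightarrow> conflict y x"
    and few_conflicts: "\<And>S x. S \<subseteq> U \<Longrightarrow> pairwise (\<lambda>y z. \<not> close y z) S \<Longrightarrow> x \<in> U \<Longrightarrow>
       finite {y\<in>S. conflict x y} \<and> card {y\<in>S. conflict x y} \<le> N"
  obtains S col where "S \<subseteq> U" "\<And>y. y \<in> S \<Longrightarrow> col y \<le> N" "\<And>x. x \<in> U \<Longrightarrow> \<exists>y\<in>S. close x y"
    "\<And>y z. y \<in> S \<Longrightarrow> z \<in> S \<Longrightarrow> y \<noteq> z \<Longrightarrow> col y = col z \<Longrightarrow> \<not> conflict y z"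
proof -
  let ?Q = "{M. coloured_packing close conflict U N M}"
  have "\<Union>C \<in> ?Q" if "C \<in> chains ?Q" for C
  proof -
    have "C \<subseteq> ?Q" "chain\<^sub>\<subseteq> C" using that unfolding chains_def by auto
    then show ?thesis
      unfolding coloured_packing_def by (auto intro!: pairwise_chain_Union)
  qed
  then obtain M where M: "coloured_packing close conflict U N M"
    and maximal: "\<And>M'. coloured_packing close conflict U N M' \<Longrightarrow> M \<subseteq> M' \<Longrightarrow> M' = M"
    using Zorn_Lemma[of ?Q] by auto
  define col where "col y = (SOME c. (y, c) \<in> M)" for y
  have col: "(y, col y) \<in> M" if "y \<in> fst ` M" for y
    using that unfolding col_def by (auto intro: someI)
  have "fst ` M \<subseteq> U" "\<And>y. y \<in> fst ` M \<Longrightarrow> col y \<le> N"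
    using M col unfolding coloured_packing_def by auto
  moreover have "\<exists>y\<in>fst ` M. close x y" if x: "x \<in> U" for x
  proof (rule ccontr)
    assume far: "\<not> (\<exists>y\<in>fst ` M. close x y)"
    obtain c where c: "coloured_packing close conflict U N (insert (x, c) M)"
      using coloured_packing_extend[OF M assms x] far by blast
    then have "(x, c) \<in> M" using maximal[OF c] by blast
    then show False using far close_refl[OF x] by force
  qed
  moreover have "\<not> conflict y z" if "y \<in> fst ` M" "z \<in> fst ` M" "y \<noteq> z" "col y = col z" for y z
    using M col[OF that(1)] col[OF that(2)] that(3,4)
    unfolding coloured_packing_def pairwise_def by fastforce
  ultimately show ?thesis by (rule that)
qed

lemma sandwiched_iff_scaled:
  assumes "0 < \<alpha>"
  shows "sandwiched \<alpha> K E \<longleftrightarrow> K \<subseteq> scaled \<alpha> E \<and> E \<subseteq> scaled \<alpha> K"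
proof -
  have "scaled (inverse \<alpha>) K \<subseteq> E \<longleftrightarrow> K \<subseteq> scaled \<alpha> E"
    using scaled_mono[of "scaled (inverse \<alpha>) K" E \<alpha>] scaled_mono[of K "scaled \<alpha> E" "inverse \<alpha>"] assms
    by (auto simp: scaled_scaled)
  then show ?thesis unfolding sandwiched_def scaled_def[symmetric] by blast
qed

lemma near_of_sandwiched:
  assumes "0 < \<alpha>" "sandwiched \<alpha> K E1" "sandwiched \<alpha> K E2"
  shows "near (\<alpha> * \<alpha>) E1 E2"
  using assms scaled_mono[of K "scaled \<alpha> E1" \<alpha>] scaled_mono[of K "scaled \<alpha> E2" \<alpha>]
  unfolding sandwiched_iff_scaled[OF assms(1)] near_def by (auto simp: scaled_scaled)

lemma sandwiched_of_near:
  assumes K: "sym_convex K" and F: "sym_convex F" and GF: "near 2 G F"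
    and "G \<subseteq> scaled a K" "K \<subseteq> scaled b G" "0 < a" "0 < b" "2 * a \<le> \<alpha>" "2 * b \<le> \<alpha>"
  shows "sandwiched \<alpha> K F"
proof -
  have "F \<subseteq> scaled 2 (scaled a K)" using GF assms(4) scaled_mono near_def by blast
  also have "\<dots> \<subseteq> scaled \<alpha> K" using assms by (simp add: scaled_scaled scaled_subset_scaled[OF K])
  finally have "F \<subseteq> scaled \<alpha> K" .
  have "K \<subseteq> scaled b (scaled 2 F)" using GF assms(5) scaled_mono near_def by blast
  also have "\<dots> \<subseteq> scaled \<alpha> F" using assms by (simp add: scaled_scaled scaled_subset_scaled[OF F] mult.commute)
  finally show ?thesis using \<open>F \<subseteq> scaled \<alpha> K\<close> assms by (simp add: sandwiched_iff_scaled)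
qed

lemma one_lt_john_constant: "1 < 2 * real DIM('a::euclidean_space) * 2 ^ DIM('a)"
proof -
  have "1 * 1 \<le> real DIM('a) * 2 ^ DIM('a)"
    using DIM_positive[where 'a='a] by (intro mult_mono) simp_all
  then show ?thesis by simp
qed

lemma exists_coloured_ellipsoid_net:
  assumes "0 < R"
  obtains S :: "'a::euclidean_space set set" and col :: "'a set \<Rightarrow> nat" and N :: nat
  where "S \<subseteq> centred_ellipsoids" "\<And>E. E \<in> S \<Longrightarrow> col E < N"
    "\<And>G. G \<in> centred_ellipsoids \<Longrightarrow> \<exists>F\<in>S. near 2 G F"
    "\<And>E1 E2. E1 \<in> S \<Longrightarrow> E2 \<in> S \<Longrightarrow> E1 \<noteq> E2 \<Longrightarrow> col E1 = col E2 \<Longrightarrow> \<not> near R E1 E2"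
proof -
  obtain N where N: "\<And>(S :: 'a set set) F. S \<subseteq> centred_ellipsoids \<Longrightarrow> pairwise (\<lambda>E F. \<not> near 2 E F) S \<Longrightarrow>
       F \<in> centred_ellipsoids \<Longrightarrow> finite {E\<in>S. near R F E} \<and> card {E\<in>S. near R F E} \<le> N"
    using finite_near_in_separated[OF assms, where 'a='a] by blast
  have refl: "\<And>E :: 'a set. E \<in> centred_ellipsoids \<Longrightarrow> near 2 E E"
    by (simp add: near_refl sym_convex_centred_ellipsoid)
  have sym: "\<And>t (E :: 'a set) F. near t E F \<Longrightarrow> near t F E" using near_sym by blast
  obtain S :: "'a set set" and col where S: "S \<subseteq> centred_ellipsoids" "\<And>E. E \<in> S \<Longrightarrow> col E \<le> N"
    "\<And>G. G \<in> centred_ellipsoids \<Longrightarrow> \<exists>F\<in>S. near 2 G F"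
    "\<And>E1 E2. E1 \<in> S \<Longrightarrow> E2 \<in> S \<Longrightarrow> E1 \<noteq> E2 \<Longrightarrow> col E1 = col E2 \<Longrightarrow> \<not> near R E1 E2"
    using exists_coloured_net[of centred_ellipsoids "near 2" "near R" N, OF refl sym sym N] by blast
  show ?thesis
  proof (rule that[of S col "Suc N"])
    show "col E < Suc N" if "E \<in> S" for E using S(2)[OF that] by simp
  qed (fact S)+
qed

lemma sandwiched_in_ellipsoid_net:
  fixes K :: "'a::euclidean_space set"
  assumes K: "K \<in> sym_convex_bodies"
    and S: "S \<subseteq> centred_ellipsoids" "\<And>G. G \<in> centred_ellipsoids \<Longrightarrow> \<exists>F\<in>S. near 2 G F"
    and \<alpha>: "2 * real DIM('a) * 2 ^ DIM('a) \<le> \<alpha>"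
  shows "\<exists>F\<in>S. sandwiched \<alpha> K F"
proof -
  let ?n = "real DIM('a)"
  have n: "1 \<le> ?n" using DIM_positive[where 'a='a] by linarith
  have "2 * 2 ^ DIM('a) \<le> 2 * ?n * 2 ^ DIM('a)" "2 * ?n \<le> 2 * ?n * 2 ^ DIM('a)" using n by simp_all
  then have "2 * 2 ^ DIM('a) \<le> \<alpha>" "2 * ?n \<le> \<alpha>" using \<alpha> by linarith+
  obtain A :: "'a \<Rightarrow> 'a" where A: "linear A" "bij A"
    "A ` cball 0 1 \<subseteq> scaled (2 ^ DIM('a)) K" "K \<subseteq> scaled ?n (A ` cball 0 1)"
    by (rule exists_ellipsoid_between[OF K])
  then obtain F where "F \<in> S" "near 2 (A ` cball 0 1) F"
    using S(2) unfolding centred_ellipsoids_def by blast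
  moreover have "sym_convex F" using \<open>F \<in> S\<close> S(1) sym_convex_centred_ellipsoid by blast
  ultimately show ?thesis
    using sandwiched_of_near[OF sym_convex_body[OF K] _ _ A(3,4)] n
      \<open>2 * 2 ^ DIM('a) \<le> \<alpha>\<close> \<open>2 * ?n \<le> \<alpha>\<close> by auto
qed

lemma coloured_sandwiching_family:
  assumes \<alpha>: "2 * real DIM('a) * 2 ^ DIM('a) \<le> \<alpha>"
  shows "\<exists>(\<E>\<^sub>0 :: 'a::euclidean_space set set) (N :: nat) (col :: 'a set \<Rightarrow> nat).
       \<E>\<^sub>0 \<subseteq> centred_ellipsoids \<and>
       (\<forall>E\<in>\<E>\<^sub>0. col E < N) \<and>
       (\<forall>K\<in>sym_convex_bodies. \<exists>E\<in>\<E>\<^sub>0. sandwiched \<alpha> K E) \<and>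
       (\<forall>K\<in>sym_convex_bodies. \<forall>E1\<in>\<E>\<^sub>0. \<forall>E2\<in>\<E>\<^sub>0.
          col E1 = col E2 \<longrightarrow> sandwiched \<alpha> K E1 \<longrightarrow> sandwiched \<alpha> K E2 \<longrightarrow> E1 = E2)"
proof -
  have "0 < \<alpha>" using \<alpha> one_lt_john_constant[where 'a='a] by linarith
  then have "0 < \<alpha> * \<alpha>" by simp
  obtain S :: "'a set set" and col :: "'a set \<Rightarrow> nat" and N :: nat
    where S: "S \<subseteq> centred_ellipsoids" "\<And>E. E \<in> S \<Longrightarrow> col E < N"
    "\<And>G. G \<in> centred_ellipsoids \<Longrightarrow> \<exists>F\<in>S. near 2 G F"
    "\<And>E1 E2. E1 \<in> S \<Longrightarrow> E2 \<in> S \<Longrightarrow> E1 \<noteq> E2 \<Longrightarrow> col E1 = col E2 \<Longrightarrow> \<not> near (\<alpha> * \<alpha>) E1 E2"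
    using exists_coloured_ellipsoid_net[OF \<open>0 < \<alpha> * \<alpha>\<close>, where 'a='a] by blast
  have unique: "E1 = E2"
    if "E1 \<in> S" "E2 \<in> S" "col E1 = col E2" "sandwiched \<alpha> K E1" "sandwiched \<alpha> K E2" for K E1 E2
    using S(4) near_of_sandwiched[OF \<open>0 < \<alpha>\<close>] that by blast
  show ?thesis
    by (intro exI[of _ S] exI[of _ N] exI[of _ col] conjI ballI impI)
      (use S(1,2) sandwiched_in_ellipsoid_net[OF _ S(1,3) \<alpha>] unique in blast)+
qed

theorem lemma7p1:
  shows "\<exists>\<alpha>\<^sub>0 > (1::real). \<forall>\<alpha> \<ge> \<alpha>\<^sub>0.
     \<exists>(\<E>\<^sub>0 :: 'a::euclidean_space set set) (N :: nat) (col :: 'a set \<Rightarrow> nat).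
       \<E>\<^sub>0 \<subseteq> centred_ellipsoids \<and>
       (\<forall>E\<in>\<E>\<^sub>0. col E < N) \<and>
       (\<forall>K\<in>sym_convex_bodies. \<exists>E\<in>\<E>\<^sub>0. sandwiched \<alpha> K E) \<and>
       (\<forall>K\<in>sym_convex_bodies. \<forall>E1\<in>\<E>\<^sub>0. \<forall>E2\<in>\<E>\<^sub>0.
          col E1 = col E2 \<longrightarrow> sandwiched \<alpha> K E1 \<longrightarrow> sandwiched \<alpha> K E2 \<longrightarrow> E1 = E2)"
proof (intro exI[of _ "2 * real DIM('a) * 2 ^ DIM('a)"] conjI allI impI)
  show "1 < 2 * real DIM('a) * 2 ^ DIM('a)" by (rule one_lt_john_constant)
qed (rule coloured_sandwiching_family)

end
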